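(* Let $L\ge3$ and let $\hat\rho$ be a density operator on $\mathcal H_A\otimes\mathcal H_B$ with $\hat P^{(1)}\hat\rho\hat P^{(1)}=\hat\rho$. Define $e^{(\mathrm b,1)}=\mathrm{tr}(\hat\rho\,\hat e^{(\mathrm b)})$ and $e^{(\mathrm{ph},1)}=\mathrm{tr}(\hat\rho\,\hat e^{(\mathrm{ph})})$. If $0\le e^{(\mathrm b,1)}\le(10-3\sqrt5)/22$, then $$e^{(\mathrm{ph},1)}\le(3+\sqrt5)\,e^{(\mathrm b,1)},$$ and if $e^{(\mathrm b,1)}>(10-3\sqrt5)/22$, then $$e^{(\mathrm{ph},1)}\le\inf_{0<\lambda<3+\sqrt5}\Big\{\lambda e^{(\mathrm b,1)}+\frac{3-2\lambda+\sqrt{1+2\lambda^2}}{4}\Big\}.$$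
   Context: $\mathcal H_A=(\mathbb C^2)^{\otimes L}$ (qubits labelled $1,\dots,L$, with $Z$-basis $|0\rangle,|1\rangle$) and $\mathcal H_B=\mathbb C^L$ with orthonormal basis $|1\rangle_B,\dots,|L\rangle_B$. $\hat P(|\psi\rangle)=|\psi\rangle\langle\psi|$, $\bar s=s\oplus1$, and $\hat H|s\rangle=(|0\rangle+(-1)^s|1\rangle)/\sqrt2$. Let $\kappa_1=\kappa_L=1$ and $\kappa_i=1/2$ for $2\le i\le L-1$. For $1\le j\le L-1$ and $s\in\{0,1\}$ let $\hat\Pi_{j,s}=\hat P\big((\sqrt{\kappa_j}|j\rangle_B+(-1)^s\sqrt{\kappa_{j+1}}|j+1\rangle_B)/\sqrt2\big)$. Define (operators on the indicated qubits tensored with identity on the remaining qubits) $$\hat e^{(\mathrm{ph})}_j=\hat P(|1\rangle_{A,j}|1\rangle_{A,j+1})\otimes\sum_{s=0}^1\kappa_{j+s}\hat P(|j+s\rangle_B)+\sum_{s=0}^1\hat P(|s\rangle_{A,j}|\bar s\rangle_{A,j+1})\otimes\kappa_{j+s}\hat P(|j+s\rangle_B),$$ $$\hat e^{(\mathrm b)}_j=\sum_{s,s'\in\{0,1\}}\hat P(\hat H|s\rangle_{A,j})\otimes\hat P(\hat H|s'\rangle_{A,j+1})\otimes\hat\Pi_{j,s\oplus s'\oplus1},$$ and $\hat e^{(\mathrm{ph})}=\sum_{j=1}^{L-1}\hat e^{(\mathrm{ph})}_j$, $\hat e^{(\mathrm b)}=\sum_{j=1}^{L-1}\hat e^{(\mathrm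 b)}_j$. For $\bm a\in\{0,1\}^L$ let $|\bm a\rangle_A=|a_1\rangle_{A,1}\cdots|a_L\rangle_{A,L}$ and $\mathrm{wt}(\bm a)$ the number of $1$'s. The projector for one-photon emission is $\hat P^{(1)}=\sum_{\bm a:\,\mathrm{wt}(\bm a)=1}\sum_{i=1}^L\hat P(|\bm a\rangle_A|i\rangle_B)$. (Physically, $e^{(\mathrm b,1)}$ and $e^{(\mathrm{ph},1)}$ are the bit and phase error rates of single-photon emission events in the DPS QKD protocol.) *)

theory Defs
  imports Complex_Main
begin

text \<open>Basis of H_A (x) H_B: pairs (a, i) with a a 0/1 list of length L
  (a!(k-1) is the Z-basis value of qubit k) and i in {1..L}.
  Operators are represented by their matrix kernels K x y = <x|K|y>.\<close>

type_synonym idx = "nat list \<times> nat"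
type_synonym op = "idx \<Rightarrow> idx \<Rightarrow> complex"
type_synonym loc = "nat \<times> nat \<times> nat"

definition Idx :: "nat \<Rightarrow> idx set" where
  "Idx L = {(a, i). length a = L \<and> set a \<subseteq> {0, 1} \<and> i \<in> {1..L}}"

definition proj :: "('a \<Rightarrow> complex) \<Rightarrow> 'a \<Rightarrow> 'a \<Rightarrow> complex" where
  "proj \<psi> x y = \<psi> x * cnj (\<psi> y)"

definition ket :: "nat \<Rightarrow> nat \<Rightarrow> complex" where
  "ket s t = (if t = s then 1 else 0)"

definition hket :: "nat \<Rightarrow> nat \<Rightarrow> complex" where
  "hket s t = (if t = 0 then 1 else (-1) ^ s) / complex_of_real (sqrt 2)"

definition flip :: "nat \<Rightarrow> nat" where
  "flip s = (if s = 0 then 1 else 0)"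

definition kappa :: "nat \<Rightarrow> nat \<Rightarrow> real" where
  "kappa L i = (if i = 1 \<or> i = L then 1 else 1 / 2)"

definition PiB :: "nat \<Rightarrow> nat \<Rightarrow> nat \<Rightarrow> nat \<Rightarrow> nat \<Rightarrow> complex" where
  "PiB L j s = proj (\<lambda>b. (complex_of_real (sqrt (kappa L j)) * ket j b
       + (-1) ^ s * complex_of_real (sqrt (kappa L (j + 1))) * ket (j + 1) b)
       / complex_of_real (sqrt 2))"

text \<open>Local operators on (qubit j, qubit j+1, B), kernel on (x1,x2,b).\<close>
definition eph_loc :: "nat \<Rightarrow> nat \<Rightarrow> loc \<Rightarrow> loc \<Rightarrow> complex" where
  "eph_loc L j = (\<lambda>(x1, x2, b) (y1, y2, b').
     proj (ket 1) x1 y1 * proj (ket 1) x2 y2 *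
       (\<Sum>s\<in>{0, 1}. complex_of_real (kappa L (j + s)) * proj (ket (j + s)) b b')
   + (\<Sum>s\<in>{0, 1}. proj (ket s) x1 y1 * proj (ket (flip s)) x2 y2 *
       (complex_of_real (kappa L (j + s)) * proj (ket (j + s)) b b')))"

definition eb_loc :: "nat \<Rightarrow> nat \<Rightarrow> loc \<Rightarrow> loc \<Rightarrow> complex" where
  "eb_loc L j = (\<lambda>(x1, x2, b) (y1, y2, b').
     \<Sum>s\<in>{0, 1}. \<Sum>s'\<in>{0, 1}. proj (hket s) x1 y1 * proj (hket s') x2 y2 *
        PiB L j ((s + s' + 1) mod 2) b b')"

definition lift :: "nat \<Rightarrow> nat \<Rightarrow> (loc \<Rightarrow> loc \<Rightarrow> complex) \<Rightarrow> op" where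
  "lift L j K = (\<lambda>(a, i) (a', i').
     K (a ! (j - 1), a ! j, i) (a' ! (j - 1), a' ! j, i') *
     (if \<forall>k\<in>{1..L} - {j, j + 1}. a ! (k - 1) = a' ! (k - 1) then 1 else 0))"

definition e_ph :: "nat \<Rightarrow> op" where
  "e_ph L x y = (\<Sum>j\<in>{1..L - 1}. lift L j (eph_loc L j) x y)"

definition e_b :: "nat \<Rightarrow> op" where
  "e_b L x y = (\<Sum>j\<in>{1..L - 1}. lift L j (eb_loc L j) x y)"

definition P1 :: "nat \<Rightarrow> op" where
  "P1 L x y = (if x = y \<and> length (filter (\<lambda>t. t = 1) (fst x)) = 1 then 1 else 0)"

definition density_op :: "nat \<Rightarrow> op \<Rightarrow> bool" where
  "density_op L \<rho> \<longleftrightarrow>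
     (\<forall>x\<in>Idx L. \<forall>y\<in>Idx L. \<rho> x y = cnj (\<rho> y x)) \<and>
     (\<forall>v :: idx \<Rightarrow> complex. 0 \<le> Re (\<Sum>x\<in>Idx L. \<Sum>y\<in>Idx L. cnj (v x) * \<rho> x y * v y)) \<and>
     (\<Sum>x\<in>Idx L. \<rho> x x) = 1"

definition tr_prod :: "nat \<Rightarrow> op \<Rightarrow> op \<Rightarrow> complex" where
  "tr_prod L A B = (\<Sum>x\<in>Idx L. \<Sum>y\<in>Idx L. A x y * B y x)"

end

theory Submission
  imports Defs
begin

text \<open>On the one-photon sector the state is a positive semidefinite matrix indexed by labels
  \<open>(k, i)\<close>. The phase error is a \<open>\<kappa>\<close>-weighted sum of the populations of \<open>(j, j+1)\<close> and
  \<open>(j+1, j)\<close>, whereas \<open>1/2 - e\<^sup>b\<close> is a sum of the coherences between \<open>(j, j)\<close> and \<open>(j+1, j+1)\<close>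
  and between \<open>(j, j+1)\<close> and \<open>(j+1, j)\<close>, weighted by \<open>\<surd>(\<kappa>\<^sub>j \<kappa>\<^sub>j\<^sub>+\<^sub>1)\<close>. Positivity of these two
  \<open>2 \<times> 2\<close> principal minors bounds, for each \<open>j\<close>, \<open>\<lambda>\<close> times the coherences plus the phase-error
  populations by \<open>g(\<lambda>) = (3 + \<surd>(1 + 2\<lambda>\<^sup>2))/4\<close> times the four populations involved; summed over
  \<open>j\<close> the weights \<open>\<kappa>\<close> recombine into the trace, which is 1. Hence
  \<open>e\<^sup>p\<^sup>h \<le> \<lambda> e\<^sup>b + g(\<lambda>) - \<lambda>/2\<close> for \<open>0 < \<lambda> \<le> 3 + \<surd>5\<close>, and the constant vanishes at \<open>\<lambda> = 3 + \<surd>5\<close>.\<close>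

definition photon_at :: "nat \<Rightarrow> nat \<Rightarrow> nat list" where
  "photon_at L k = replicate (k - 1) 0 @ 1 # replicate (L - k) 0"

definition one_photon :: "nat \<Rightarrow> nat \<times> nat \<Rightarrow> idx" where
  "one_photon L p = (photon_at L (fst p), snd p)"

definition labels :: "nat \<Rightarrow> (nat \<times> nat) set" where
  "labels L = {1..L} \<times> {1..L}"

abbreviation weight :: "nat list \<Rightarrow> nat" where
  "weight a \<equiv> length (filter (\<lambda>t. t = 1) a)"

lemma finite_labels: "finite (labels L)"
  by (simp add: labels_def)

lemma length_photon_at: "k \<in> {1..L} \<Longrightarrow> length (photon_at L k) = L"
  by (auto simp: photon_at_def)

lemma nth_photon_at:
  "k \<in> {1..L} \<Longrightarrow> t < L \<Longrightarrow> photon_at L k ! t = (if Suc t = k then 1 else 0)"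
  by (auto simp: photon_at_def nth_append nth_Cons split: nat.splits)

lemma photon_at_inject:
  assumes "k \<in> {1..L}" "k' \<in> {1..L}" "photon_at L k = photon_at L k'"
  shows "k = k'"
proof -
  have "k - 1 < L" using assms(1) by auto
  have "photon_at L k ! (k - 1) = 1"
    using nth_photon_at[OF assms(1) \<open>k - 1 < L\<close>] assms(1) by simp
  then have "photon_at L k' ! (k - 1) = 1"
    unfolding assms(3) .
  then have "Suc (k - 1) = k'"
    using nth_photon_at[OF assms(2) \<open>k - 1 < L\<close>] by (metis zero_neq_one)
  then show ?thesis using assms(1) by simp
qed

lemma inj_on_one_photon: "inj_on (one_photon L) (labels L)"
proof (rule inj_onI)
  fix p q assume "p \<in> labels L" "q \<in> labels L" "one_photon L p = one_photon L q"
  then have "fst p = fst q" "snd p = snd q"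
    using photon_at_inject[of "fst p" L "fst q"] by (auto simp: one_photon_def labels_def)
  then show "p = q" by (simp add: prod_eq_iff)
qed

lemma one_photon_in_Idx: "p \<in> labels L \<Longrightarrow> one_photon L p \<in> Idx L"
  by (auto simp: Idx_def one_photon_def labels_def length_photon_at photon_at_def)

lemma weight_one_imp_photon_at:
  assumes "length a = L" "set a \<subseteq> {0, 1}" "weight a = 1"
  obtains k where "k \<in> {1..L}" "a = photon_at L k"
proof -
  have "card {t. t < length a \<and> a ! t = 1} = 1"
    using assms(3) by (simp add: length_filter_conv_card)
  then obtain m where m: "{t. t < length a \<and> a ! t = 1} = {m}"
    by (meson card_1_singletonE)
  then have one_iff: "t < L \<and> a ! t = 1 \<longleftrightarrow> t = m" for t
    using assms(1) by blast
  have k: "Suc m \<in> {1..L}" using one_iff[of m] by simp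
  have "a ! t = photon_at L (Suc m) ! t" if "t < L" for t
  proof -
    have "a ! t \<in> {0, 1}" using assms(1,2) that nth_mem by blast
    then show ?thesis using one_iff[of t] that nth_photon_at[OF k that] by auto
  qed
  then have "a = photon_at L (Suc m)"
    by (intro nth_equalityI) (simp_all add: assms(1) length_photon_at[OF k])
  with k that show ?thesis by blast
qed

lemma one_photon_image: "one_photon L ` labels L = {x \<in> Idx L. weight (fst x) = 1}"
proof
  show "one_photon L ` labels L \<subseteq> {x \<in> Idx L. weight (fst x) = 1}"
    using one_photon_in_Idx by (auto simp: one_photon_def photon_at_def)
  show "{x \<in> Idx L. weight (fst x) = 1} \<subseteq> one_photon L ` labels L"
  proof clarify
    fix a i assume x: "(a, i) \<in> Idx L" "weight (fst (a, i)) = 1"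
    moreover have "length a = L" "set a \<subseteq> {0, 1}" using x(1) by (auto simp: Idx_def)
    ultimately obtain k where "k \<in> {1..L}" "a = photon_at L k"
      using weight_one_imp_photon_at by (metis fst_conv)
    moreover have "i \<in> {1..L}" using x by (auto simp: Idx_def)
    ultimately show "(a, i) \<in> one_photon L ` labels L"
      by (auto simp: one_photon_def labels_def image_iff)
  qed
qed

lemma finite_Idx: "finite (Idx L)"
proof (rule finite_subset)
  show "Idx L \<subseteq> {a. set a \<subseteq> {0, 1} \<and> length a = L} \<times> {1..L}"
    by (auto simp: Idx_def)
  show "finite ({a. set a \<subseteq> {0, 1::nat} \<and> length a = L} \<times> {1..L})"
    using finite_lists_length_eq[of "{0, 1::nat}" L] by auto
qed

lemma sum_Idx_one_photon:
  assumes "\<And>x. x \<in> Idx L \<Longrightarrow> weight (fst x) \<noteq> 1 \<Longrightarrow> g x = 0"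
  shows "sum g (Idx L) = (\<Sum>p\<in>labels L. g (one_photon L p))"
proof -
  have "sum g (Idx L) = sum g {x \<in> Idx L. weight (fst x) = 1}"
    using assms by (intro sum.mono_neutral_right finite_Idx) auto
  also have "\<dots> = sum g (one_photon L ` labels L)"
    by (simp only: one_photon_image)
  also have "\<dots> = (\<Sum>p\<in>labels L. g (one_photon L p))"
    by (simp add: sum.reindex[OF inj_on_one_photon])
  finally show ?thesis .
qed

abbreviation P1_invariant :: "nat \<Rightarrow> op \<Rightarrow> bool" where
  "P1_invariant L \<rho> \<equiv> \<forall>x\<in>Idx L. \<forall>y\<in>Idx L.
     (\<Sum>z\<in>Idx L. \<Sum>w\<in>Idx L. P1 L x z * \<rho> z w * P1 L w y) = \<rho> x y"

lemma P1_sandwich: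
  assumes "x \<in> Idx L" "y \<in> Idx L"
  shows "(\<Sum>z\<in>Idx L. \<Sum>w\<in>Idx L. P1 L x z * \<rho> z w * P1 L w y)
    = (if weight (fst x) = 1 \<and> weight (fst y) = 1 then \<rho> x y else 0)"
proof -
  have right: "(\<Sum>w\<in>Idx L. \<rho> z w * P1 L w y) = (if weight (fst y) = 1 then \<rho> z y else 0)" for z
  proof -
    have "\<rho> z w * P1 L w y = (if w = y then (if weight (fst y) = 1 then \<rho> z y else 0) else 0)" for w
      by (auto simp: P1_def)
    then show ?thesis using assms(2) by (simp add: finite_Idx)
  qed
  have left: "(\<Sum>z\<in>Idx L. P1 L x z * F z) = (if weight (fst x) = 1 then F x else 0)" for F
  proof -
    have "P1 L x z * F z = (if x = z then (if weight (fst x) = 1 then F x else 0) else 0)" for z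
      by (auto simp: P1_def)
    then show ?thesis using assms(1) by (simp add: finite_Idx)
  qed
  have "(\<Sum>z\<in>Idx L. \<Sum>w\<in>Idx L. P1 L x z * \<rho> z w * P1 L w y)
      = (\<Sum>z\<in>Idx L. P1 L x z * (\<Sum>w\<in>Idx L. \<rho> z w * P1 L w y))"
    by (simp add: sum_distrib_left mult.assoc)
  then show ?thesis by (simp add: right left)
qed

lemma P1_invariant_vanishes:
  assumes "P1_invariant L \<rho>" "x \<in> Idx L" "y \<in> Idx L" "weight (fst x) \<noteq> 1 \<or> weight (fst y) \<noteq> 1"
  shows "\<rho> x y = 0"
  using assms P1_sandwich[OF assms(2,3), of \<rho>] by auto

lemma tr_prod_one_photon:
  assumes "P1_invariant L \<rho>"
  shows "tr_prod L \<rho> E = (\<Sum>p\<in>labels L. \<Sum>q\<in>labels L.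
    \<rho> (one_photon L p) (one_photon L q) * E (one_photon L q) (one_photon L p))"
proof -
  have "tr_prod L \<rho> E = (\<Sum>p\<in>labels L. \<Sum>y\<in>Idx L. \<rho> (one_photon L p) y * E y (one_photon L p))"
    unfolding tr_prod_def
    by (rule sum_Idx_one_photon) (simp add: P1_invariant_vanishes[OF assms])
  also have "\<dots> = (\<Sum>p\<in>labels L. \<Sum>q\<in>labels L.
      \<rho> (one_photon L p) (one_photon L q) * E (one_photon L q) (one_photon L p))"
    by (intro sum.cong refl sum_Idx_one_photon)
      (simp add: P1_invariant_vanishes[OF assms] one_photon_in_Idx)
  finally show ?thesis .
qed

lemma trace_one_photon:
  assumes "density_op L \<rho>" "P1_invariant L \<rho>"
  shows "(\<Sum>p\<in>labels L. \<rho> (one_photon L p) (one_photon L p)) = 1"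
proof -
  have "(\<Sum>x\<in>Idx L. \<rho> x x) = 1"
    using assms(1) unfolding density_op_def by blast
  moreover have "(\<Sum>x\<in>Idx L. \<rho> x x) = (\<Sum>p\<in>labels L. \<rho> (one_photon L p) (one_photon L p))"
  proof (rule sum_Idx_one_photon)
    fix x assume "x \<in> Idx L" "weight (fst x) \<noteq> 1"
    then show "\<rho> x x = 0" using P1_invariant_vanishes[OF assms(2)] by blast
  qed
  ultimately show ?thesis by simp
qed

lemma quadratic_form_two_point:
  fixes r :: "'a \<Rightarrow> 'a \<Rightarrow> complex" and s t :: real
  assumes "finite S" "a \<in> S" "b \<in> S" "a \<noteq> b"
  defines "v \<equiv> \<lambda>z. (if z = a then complex_of_real s else 0) + (if z = b then complex_of_real t else 0)"
  shows "(\<Sum>z\<in>S. \<Sum>w\<in>S. cnj (v z) * r z w * v w)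
    = of_real (s * s) * r a a + of_real (s * t) * r a b + of_real (t * s) * r b a + of_real (t * t) * r b b"
proof -
  have inner: "(\<Sum>w\<in>S. cnj (v z) * r z w * v w)
      = cnj (v z) * (r z a * of_real s + r z b * of_real t)" for z
  proof -
    have "cnj (v z) * r z w * v w = (if w = a then cnj (v z) * r z a * of_real s else 0)
        + (if w = b then cnj (v z) * r z b * of_real t else 0)" for w
      using assms(4) by (auto simp: v_def)
    then show ?thesis using assms(1-3) by (simp add: sum.distrib algebra_simps)
  qed
  have outer: "cnj (v z) * (r z a * of_real s + r z b * of_real t)
      = (if z = a then of_real s * (r a a * of_real s + r a b * of_real t) else 0)
      + (if z = b then of_real t * (r b a * of_real s + r b b * of_real t) else 0)" for z
    using assms(4) by (auto simp: v_def)
  show ?thesis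
    unfolding inner outer using assms(1-3) by (simp add: sum.distrib algebra_simps)
qed

lemma density_op_diag_nonneg:
  assumes "density_op L \<rho>" "x \<in> Idx L"
  shows "0 \<le> Re (\<rho> x x)"
proof -
  define v where "v = (\<lambda>z. if z = x then (1::complex) else 0)"
  have "cnj (v z) * \<rho> z w * v w = (if w = x then (if z = x then \<rho> x x else 0) else 0)" for z w
    by (simp add: v_def)
  then have "(\<Sum>z\<in>Idx L. \<Sum>w\<in>Idx L. cnj (v z) * \<rho> z w * v w) = \<rho> x x"
    using assms(2) by (simp add: finite_Idx)
  moreover have "0 \<le> Re (\<Sum>z\<in>Idx L. \<Sum>w\<in>Idx L. cnj (v z) * \<rho> z w * v w)"
    using assms(1) unfolding density_op_def by blast
  ultimately show ?thesis by simp
qed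

lemma density_op_Re_sym:
  assumes "density_op L \<rho>" "x \<in> Idx L" "y \<in> Idx L"
  shows "Re (\<rho> y x) = Re (\<rho> x y)"
proof -
  have "\<rho> y x = cnj (\<rho> x y)"
    using assms unfolding density_op_def by blast
  then show ?thesis by simp
qed

lemma density_op_two_point_nonneg:
  assumes "density_op L \<rho>" "x \<in> Idx L" "y \<in> Idx L" "x \<noteq> y"
  shows "0 \<le> s * s * Re (\<rho> x x) + 2 * s * t * Re (\<rho> x y) + t * t * Re (\<rho> y y)"
proof -
  define v where "v = (\<lambda>z. (if z = x then complex_of_real s else 0) + (if z = y then complex_of_real t else 0))"
  have "0 \<le> Re (\<Sum>z\<in>Idx L. \<Sum>w\<in>Idx L. cnj (v z) * \<rho> z w * v w)"
    using assms(1) unfolding density_op_def by blast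
  also have "(\<Sum>z\<in>Idx L. \<Sum>w\<in>Idx L. cnj (v z) * \<rho> z w * v w) =
     of_real (s * s) * \<rho> x x + of_real (s * t) * \<rho> x y + of_real (t * s) * \<rho> y x + of_real (t * t) * \<rho> y y"
    unfolding v_def by (rule quadratic_form_two_point[OF finite_Idx assms(2-4)])
  finally show ?thesis
    using density_op_Re_sym[OF assms(1-3)] by (simp add: algebra_simps)
qed

definition coupling :: "nat \<Rightarrow> nat \<Rightarrow> real" where
  "coupling L j = sqrt (kappa L j) * sqrt (kappa L (Suc j))"

definition eb_diag :: "nat \<Rightarrow> nat \<Rightarrow> nat \<Rightarrow> nat \<Rightarrow> real" where
  "eb_diag L j b b' = (if b \<noteq> b' then 0 else if b = j then kappa L j / 2
     else if b = Suc j then kappa L (Suc j) / 2 else 0)"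

definition eb_offdiag :: "nat \<Rightarrow> nat \<Rightarrow> nat \<Rightarrow> nat \<Rightarrow> real" where
  "eb_offdiag L j b b' = (if (b = j \<and> b' = Suc j) \<or> (b = Suc j \<and> b' = j) then - coupling L j / 2 else 0)"

lemma kappa_nonneg: "0 \<le> kappa L j"
  by (simp add: kappa_def)

lemma of_real_sqrt_squares:
  "complex_of_real (sqrt 2) * complex_of_real (sqrt 2) = 2"
  "complex_of_real (sqrt (kappa L i)) * complex_of_real (sqrt (kappa L i)) = of_real (kappa L i)"
  by (simp_all add: kappa_nonneg flip: of_real_mult)

lemma eb_loc_same_qubits:
  "x1 \<in> {0, 1} \<Longrightarrow> x2 \<in> {0, 1} \<Longrightarrow> eb_loc L j (x1, x2, b) (x1, x2, b') = of_real (eb_diag L j b b')"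
  by (auto simp: eb_loc_def proj_def hket_def PiB_def ket_def eb_diag_def
      of_real_sqrt_squares mult.assoc[symmetric])

lemma eb_loc_exchange:
  "eb_loc L j (1, 0, b) (0, 1, b') = of_real (eb_offdiag L j b b')"
  "eb_loc L j (0, 1, b) (1, 0, b') = of_real (eb_offdiag L j b b')"
  by (auto simp: eb_loc_def proj_def hket_def PiB_def ket_def eb_offdiag_def coupling_def
      of_real_sqrt_squares mult.assoc[symmetric])

lemma eph_loc_values:
  "eph_loc L j (0, 0, b) (0, 0, b') = 0"
  "eph_loc L j (1, 0, b) (1, 0, b') = (if b = Suc j \<and> b' = Suc j then of_real (kappa L (Suc j)) else 0)"
  "eph_loc L j (0, 1, b) (0, 1, b') = (if b = j \<and> b' = j then of_real (kappa L j) else 0)"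
  "eph_loc L j (1, 0, b) (0, 1, b') = 0"
  "eph_loc L j (0, 1, b) (1, 0, b') = 0"
  by (simp_all add: eph_loc_def proj_def ket_def flip_def)

lemma lift_one_photon:
  assumes j: "1 \<le> j" "j < L" and p: "p \<in> labels L" and q: "q \<in> labels L"
  shows "lift L j K (one_photon L q) (one_photon L p) =
    (if fst q = fst p \<or> {fst q, fst p} \<subseteq> {j, Suc j}
     then K (if fst q = j then 1 else 0, if fst q = Suc j then 1 else 0, snd q)
            (if fst p = j then 1 else 0, if fst p = Suc j then 1 else 0, snd p)
     else 0)"
proof -
  obtain k i k' i' where pq: "p = (k, i)" "q = (k', i')" by (cases p, cases q)
  have k: "k \<in> {1..L}" and k': "k' \<in> {1..L}" using p q pq by (auto simp: labels_def)
  have nth: "photon_at L k ! (t - 1) = (if t = k then 1 else 0)"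
    "photon_at L k' ! (t - 1) = (if t = k' then 1 else 0)" if "t \<in> {1..L}" for t
    using that nth_photon_at[OF k, of "t - 1"] nth_photon_at[OF k', of "t - 1"] by auto
  have "(\<forall>t\<in>{1..L} - {j, j + 1}. photon_at L k' ! (t - 1) = photon_at L k ! (t - 1))
      \<longleftrightarrow> (\<forall>t\<in>{1..L} - {j, j + 1}. (t = k') = (t = k))"
  proof (intro ball_cong refl)
    fix t assume "t \<in> {1..L} - {j, j + 1}"
    then have t: "t \<in> {1..L}" by blast
    show "(photon_at L k' ! (t - 1) = photon_at L k ! (t - 1)) = ((t = k') = (t = k))"
      using nth[OF t] by simp
  qed
  also have "\<dots> \<longleftrightarrow> k' = k \<or> {k', k} \<subseteq> {j, Suc j}"
    using k k' by auto
  finally have agree: "(\<forall>t\<in>{1..L} - {j, j + 1}. photon_at L k' ! (t - 1) = photon_at L k ! (t - 1))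
      \<longleftrightarrow> k' = k \<or> {k', k} \<subseteq> {j, Suc j}" .
  have "j \<in> {1..L}" "Suc j \<in> {1..L}" using j by auto
  then show ?thesis
    unfolding pq lift_def one_photon_def fst_conv snd_conv split agree
    using nth[of j] nth[of "Suc j"] by auto
qed

definition coherence_ind :: "nat \<Rightarrow> nat \<times> nat \<Rightarrow> nat \<times> nat \<Rightarrow> real" where
  "coherence_ind j p q =
     (if p = (j, j) \<and> q = (Suc j, Suc j) then 1 else 0) + (if p = (j, Suc j) \<and> q = (Suc j, j) then 1 else 0)
   + (if p = (Suc j, j) \<and> q = (j, Suc j) then 1 else 0) + (if p = (Suc j, Suc j) \<and> q = (j, j) then 1 else 0)"

lemma lift_eb_one_photon:
  assumes j: "1 \<le> j" "j < L" and p: "p \<in> labels L" and q: "q \<in> labels L"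
  shows "lift L j (eb_loc L j) (one_photon L q) (one_photon L p)
    = of_real ((if q = p then eb_diag L j (snd p) (snd p) else 0) - coupling L j / 2 * coherence_ind j p q)"
proof -
  obtain k i k' i' where pq: "p = (k, i)" "q = (k', i')" by (cases p, cases q)
  consider "k' = k" | "k' = j" "k = Suc j" | "k' = Suc j" "k = j" | "k' \<noteq> k" "\<not> {k', k} \<subseteq> {j, Suc j}"
    by fastforce
  then show ?thesis
    by cases (use lift_one_photon[OF j p q] pq in \<open>auto simp: eb_loc_same_qubits
        eb_loc_exchange[unfolded One_nat_def] eb_diag_def eb_offdiag_def coherence_ind_def\<close>)
qed

lemma lift_eph_one_photon:
  assumes j: "1 \<le> j" "j < L" and p: "p \<in> labels L" and q: "q \<in> labels L"
  shows "lift L j (eph_loc L j) (one_photon L q) (one_photon L p)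
    = of_real ((if q = p \<and> p = (j, Suc j) then kappa L (Suc j) else 0)
             + (if q = p \<and> p = (Suc j, j) then kappa L j else 0))"
proof -
  obtain k i k' i' where pq: "p = (k, i)" "q = (k', i')" by (cases p, cases q)
  consider "k' = k" "k = j" | "k' = k" "k = Suc j" | "k' = k" "k \<noteq> j" "k \<noteq> Suc j"
    | "k' = j" "k = Suc j" | "k' = Suc j" "k = j" | "k' \<noteq> k" "\<not> {k', k} \<subseteq> {j, Suc j}"
    by fastforce
  then show ?thesis
    by cases (use lift_one_photon[OF j p q] pq in \<open>auto simp: eph_loc_values[unfolded One_nat_def]\<close>)
qed

lemma sum_eb_diag:
  assumes "3 \<le> L" "i \<in> {1..L}"
  shows "(\<Sum>j\<in>{1..L-1}. eb_diag L j i i) = 1 / 2"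
proof -
  have "eb_diag L j i i = (if j = i then kappa L i / 2 else 0) + (if j = i - 1 then kappa L i / 2 else 0)" for j
    using assms(2) by (auto simp: eb_diag_def)
  then have "(\<Sum>j\<in>{1..L-1}. eb_diag L j i i)
      = (if i \<in> {1..L-1} then kappa L i / 2 else 0) + (if i - 1 \<in> {1..L-1} then kappa L i / 2 else 0)"
    by (simp add: sum.distrib)
  also have "\<dots> = 1 / 2" using assms by (auto simp: kappa_def)
  finally show ?thesis .
qed

lemma sum_kappa_weighted:
  assumes "3 \<le> L"
  shows "(\<Sum>j\<in>{1..L-1}. kappa L j * f j + kappa L (Suc j) * f (Suc j)) = (\<Sum>i\<in>{1..L}. f i)"
proof -
  have "(\<Sum>i\<in>{1..L}. f i) = (\<Sum>i\<in>{1..L}. \<Sum>j\<in>{1..L-1}. 2 * f i * eb_diag L j i i)"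
  proof (intro sum.cong refl)
    fix i assume "i \<in> {1..L}"
    then have "(\<Sum>j\<in>{1..L-1}. eb_diag L j i i) = 1 / 2" by (rule sum_eb_diag[OF assms])
    then show "f i = (\<Sum>j\<in>{1..L-1}. 2 * f i * eb_diag L j i i)"
      by (simp flip: sum_distrib_left)
  qed
  also have "\<dots> = (\<Sum>j\<in>{1..L-1}. \<Sum>i\<in>{1..L}. 2 * f i * eb_diag L j i i)"
    by (rule sum.swap)
  also have "\<dots> = (\<Sum>j\<in>{1..L-1}. kappa L j * f j + kappa L (Suc j) * f (Suc j))"
  proof (intro sum.cong refl)
    fix j assume "j \<in> {1..L-1}"
    moreover have "2 * f i * eb_diag L j i i = (if i = j then kappa L j * f j else 0)
        + (if i = Suc j then kappa L (Suc j) * f (Suc j) else 0)" for i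
      by (auto simp: eb_diag_def)
    ultimately show "(\<Sum>i\<in>{1..L}. 2 * f i * eb_diag L j i i) = kappa L j * f j + kappa L (Suc j) * f (Suc j)"
      by (auto simp: sum.distrib)
  qed
  finally show ?thesis by simp
qed

lemma e_b_one_photon:
  assumes "3 \<le> L" and p: "p \<in> labels L" and q: "q \<in> labels L"
  shows "e_b L (one_photon L q) (one_photon L p)
    = of_real ((if q = p then 1 / 2 else 0) - (\<Sum>j\<in>{1..L-1}. coupling L j / 2 * coherence_ind j p q))"
proof -
  have diag: "(\<Sum>j\<in>{1..L-1}. if q = p then eb_diag L j (snd p) (snd p) else 0)
      = (if q = p then 1 / 2 else 0)"
    using sum_eb_diag[OF assms(1)] p by (simp add: labels_def mem_Times_iff)
  have "e_b L (one_photon L q) (one_photon L p) = of_real (\<Sum>j\<in>{1..L-1}.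
      (if q = p then eb_diag L j (snd p) (snd p) else 0) - coupling L j / 2 * coherence_ind j p q)"
    unfolding e_b_def of_real_sum by (rule sum.cong) (use lift_eb_one_photon[OF _ _ p q] in auto)
  also have "(\<Sum>j\<in>{1..L-1}. (if q = p then eb_diag L j (snd p) (snd p) else 0) - coupling L j / 2 * coherence_ind j p q)
      = (if q = p then 1 / 2 else 0) - (\<Sum>j\<in>{1..L-1}. coupling L j / 2 * coherence_ind j p q)"
    by (simp only: sum_subtractf diag)
  finally show ?thesis .
qed

lemma e_ph_one_photon:
  assumes p: "p \<in> labels L" and q: "q \<in> labels L"
  shows "e_ph L (one_photon L q) (one_photon L p)
    = of_real (\<Sum>j\<in>{1..L-1}. (if q = p \<and> p = (j, Suc j) then kappa L (Suc j) else 0)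
                            + (if q = p \<and> p = (Suc j, j) then kappa L j else 0))"
  unfolding e_ph_def of_real_sum
  by (rule sum.cong) (use lift_eph_one_photon[OF _ _ p q] in auto)

definition re_entry :: "nat \<Rightarrow> op \<Rightarrow> nat \<times> nat \<Rightarrow> nat \<times> nat \<Rightarrow> real" where
  "re_entry L \<rho> p q = Re (\<rho> (one_photon L p) (one_photon L q))"

lemma Re_tr_prod_real_kernel:
  assumes "P1_invariant L \<rho>"
    and "\<And>p q. p \<in> labels L \<Longrightarrow> q \<in> labels L \<Longrightarrow> E (one_photon L q) (one_photon L p) = of_real (M p q)"
  shows "Re (tr_prod L \<rho> E) = (\<Sum>p\<in>labels L. \<Sum>q\<in>labels L. re_entry L \<rho> p q * M p q)"
  unfolding tr_prod_one_photon[OF assms(1)] Re_sum re_entry_def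
  by (intro sum.cong refl) (simp add: assms(2))

lemma double_sum_indicator:
  fixes f :: "'a \<Rightarrow> 'a \<Rightarrow> real"
  assumes "finite A" "a \<in> A" "b \<in> A"
  shows "(\<Sum>p\<in>A. \<Sum>q\<in>A. f p q * (if p = a \<and> q = b then 1 else 0)) = f a b"
proof -
  have "(\<Sum>q\<in>A. f p q * (if p = a \<and> q = b then 1 else 0)) = (if p = a then f a b else 0)" for p
    using assms by (auto simp: if_distrib cong: if_cong)
  then show ?thesis using assms by simp
qed

lemma sum_coherence_ind:
  assumes "j \<in> {1..L-1}"
  shows "(\<Sum>p\<in>labels L. \<Sum>q\<in>labels L. f p q * coherence_ind j p q)
    = f (j, j) (Suc j, Suc j) + f (j, Suc j) (Suc j, j) + f (Suc j, j) (j, Suc j) + f (Suc j, Suc j) (j, j)"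
proof -
  have "(j, j) \<in> labels L" "(j, Suc j) \<in> labels L" "(Suc j, j) \<in> labels L" "(Suc j, Suc j) \<in> labels L"
    using assms by (auto simp: labels_def)
  then show ?thesis
    unfolding coherence_ind_def distrib_left sum.distrib
    by (simp only: double_sum_indicator[OF finite_labels])
qed

lemma sum_swap_outer:
  "(\<Sum>p\<in>A. \<Sum>q\<in>B. \<Sum>j\<in>J. f p q j) = (\<Sum>j\<in>J. \<Sum>p\<in>A. \<Sum>q\<in>B. f p q j)"
proof -
  have "(\<Sum>p\<in>A. \<Sum>q\<in>B. \<Sum>j\<in>J. f p q j) = (\<Sum>p\<in>A. \<Sum>j\<in>J. \<Sum>q\<in>B. f p q j)"
    by (intro sum.cong refl sum.swap)
  also have "\<dots> = (\<Sum>j\<in>J. \<Sum>p\<in>A. \<Sum>q\<in>B. f p q j)"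
    by (rule sum.swap)
  finally show ?thesis .
qed

lemma re_entry_sym:
  "density_op L \<rho> \<Longrightarrow> p \<in> labels L \<Longrightarrow> q \<in> labels L \<Longrightarrow> re_entry L \<rho> q p = re_entry L \<rho> p q"
  unfolding re_entry_def by (metis density_op_Re_sym one_photon_in_Idx)

lemma re_entry_diag_nonneg:
  "density_op L \<rho> \<Longrightarrow> p \<in> labels L \<Longrightarrow> 0 \<le> re_entry L \<rho> p p"
  unfolding re_entry_def by (metis density_op_diag_nonneg one_photon_in_Idx)

lemma re_entry_two_point_nonneg:
  assumes "density_op L \<rho>" "p \<in> labels L" "q \<in> labels L" "p \<noteq> q"
  shows "0 \<le> s * s * re_entry L \<rho> p p + 2 * s * t * re_entry L \<rho> p q + t * t * re_entry L \<rho> q q"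
  unfolding re_entry_def using assms inj_on_one_photon[of L]
  by (intro density_op_two_point_nonneg) (auto simp: one_photon_in_Idx dest: inj_onD)

lemma sum_re_entry_diag:
  "density_op L \<rho> \<Longrightarrow> P1_invariant L \<rho> \<Longrightarrow> (\<Sum>p\<in>labels L. re_entry L \<rho> p p) = 1"
  unfolding re_entry_def by (simp flip: Re_sum add: trace_one_photon)

lemma Re_tr_e_b:
  assumes L: "3 \<le> L" and dens: "density_op L \<rho>" and inv: "P1_invariant L \<rho>"
  shows "Re (tr_prod L \<rho> (e_b L)) = 1 / 2 - (\<Sum>j\<in>{1..L-1}. coupling L j *
    (re_entry L \<rho> (j, j) (Suc j, Suc j) + re_entry L \<rho> (j, Suc j) (Suc j, j)))"
proof -
  let ?e = "re_entry L \<rho>" and ?J = "{1..L-1}"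
  have "Re (tr_prod L \<rho> (e_b L)) = (\<Sum>p\<in>labels L. \<Sum>q\<in>labels L. ?e p q *
      ((if q = p then 1 / 2 else 0) - (\<Sum>j\<in>?J. coupling L j / 2 * coherence_ind j p q)))"
    by (rule Re_tr_prod_real_kernel[OF inv], rule e_b_one_photon[OF L])
  also have "\<dots> = (\<Sum>p\<in>labels L. \<Sum>q\<in>labels L. ?e p q * (if q = p then 1 / 2 else 0))
      - (\<Sum>p\<in>labels L. \<Sum>q\<in>labels L. \<Sum>j\<in>?J. ?e p q * (coupling L j / 2 * coherence_ind j p q))"
    by (simp only: right_diff_distrib sum_subtractf sum_distrib_left)
  also have "(\<Sum>p\<in>labels L. \<Sum>q\<in>labels L. \<Sum>j\<in>?J. ?e p q * (coupling L j / 2 * coherence_ind j p q))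
      = (\<Sum>j\<in>?J. coupling L j / 2 * (\<Sum>p\<in>labels L. \<Sum>q\<in>labels L. ?e p q * coherence_ind j p q))"
    by (subst sum_swap_outer) (simp only: sum_distrib_left mult.left_commute)
  also have "(\<Sum>p\<in>labels L. \<Sum>q\<in>labels L. ?e p q * (if q = p then 1 / 2 else 0)) = 1 / 2"
  proof -
    have "(\<Sum>q\<in>labels L. ?e p q * (if q = p then 1 / 2 else 0)) = ?e p p / 2" if "p \<in> labels L" for p
    proof -
      have "?e p q * (if q = p then 1 / 2 else 0) = (if q = p then ?e p p / 2 else 0)" for q
        by simp
      with that show ?thesis by (simp only: sum.delta finite_labels if_True)
    qed
    then have "(\<Sum>p\<in>labels L. \<Sum>q\<in>labels L. ?e p q * (if q = p then 1 / 2 else 0))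
        = (\<Sum>p\<in>labels L. ?e p p / 2)"
      by (rule sum.cong[OF refl])
    then show ?thesis
      by (simp only: sum_divide_distrib[symmetric] sum_re_entry_diag[OF dens inv])
  qed
  also have "(\<Sum>j\<in>?J. coupling L j / 2 * (\<Sum>p\<in>labels L. \<Sum>q\<in>labels L. ?e p q * coherence_ind j p q))
      = (\<Sum>j\<in>?J. coupling L j * (?e (j, j) (Suc j, Suc j) + ?e (j, Suc j) (Suc j, j)))"
  proof (intro sum.cong refl)
    fix j assume j: "j \<in> ?J"
    then have "(j, j) \<in> labels L" "(j, Suc j) \<in> labels L" "(Suc j, j) \<in> labels L" "(Suc j, Suc j) \<in> labels L"
      by (auto simp: labels_def)
    then have "?e (Suc j, Suc j) (j, j) = ?e (j, j) (Suc j, Suc j)" "?e (Suc j, j) (j, Suc j) = ?e (j, Suc j) (Suc j, j)"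
      by (simp_all add: re_entry_sym[OF dens])
    then show "coupling L j / 2 * (\<Sum>p\<in>labels L. \<Sum>q\<in>labels L. ?e p q * coherence_ind j p q)
        = coupling L j * (?e (j, j) (Suc j, Suc j) + ?e (j, Suc j) (Suc j, j))"
      unfolding sum_coherence_ind[OF j] by (simp add: field_simps)
  qed
  finally show ?thesis .
qed

lemma Re_tr_e_ph:
  assumes inv: "P1_invariant L \<rho>"
  shows "Re (tr_prod L \<rho> (e_ph L)) = (\<Sum>j\<in>{1..L-1}.
    kappa L (Suc j) * re_entry L \<rho> (j, Suc j) (j, Suc j) + kappa L j * re_entry L \<rho> (Suc j, j) (Suc j, j))"
proof -
  let ?e = "re_entry L \<rho>" and ?J = "{1..L-1}"
  have "Re (tr_prod L \<rho> (e_ph L)) = (\<Sum>p\<in>labels L. \<Sum>q\<in>labels L. ?e p q *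
      (\<Sum>j\<in>?J. (if q = p \<and> p = (j, Suc j) then kappa L (Suc j) else 0)
              + (if q = p \<and> p = (Suc j, j) then kappa L j else 0)))"
    by (rule Re_tr_prod_real_kernel[OF inv], rule e_ph_one_photon)
  also have "\<dots> = (\<Sum>j\<in>?J. \<Sum>p\<in>labels L. \<Sum>q\<in>labels L. ?e p q *
      ((if q = p \<and> p = (j, Suc j) then kappa L (Suc j) else 0) + (if q = p \<and> p = (Suc j, j) then kappa L j else 0)))"
    unfolding sum_distrib_left by (rule sum_swap_outer)
  also have "\<dots> = (\<Sum>j\<in>?J. kappa L (Suc j) * ?e (j, Suc j) (j, Suc j) + kappa L j * ?e (Suc j, j) (Suc j, j))"
  proof (intro sum.cong refl)
    fix j assume "j \<in> ?J"
    then have a: "(j, Suc j) \<in> labels L" and b: "(Suc j, j) \<in> labels L" by (auto simp: labels_def)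
    have "?e p q * ((if q = p \<and> p = (j, Suc j) then kappa L (Suc j) else 0)
        + (if q = p \<and> p = (Suc j, j) then kappa L j else 0))
      = kappa L (Suc j) * (?e p q * (if p = (j, Suc j) \<and> q = (j, Suc j) then 1 else 0))
        + kappa L j * (?e p q * (if p = (Suc j, j) \<and> q = (Suc j, j) then 1 else 0))" for p q
      by auto
    then show "(\<Sum>p\<in>labels L. \<Sum>q\<in>labels L. ?e p q *
        ((if q = p \<and> p = (j, Suc j) then kappa L (Suc j) else 0) + (if q = p \<and> p = (Suc j, j) then kappa L j else 0)))
      = kappa L (Suc j) * ?e (j, Suc j) (j, Suc j) + kappa L j * ?e (Suc j, j) (Suc j, j)"
      by (simp only: sum.distrib flip: sum_distrib_left)
        (simp only: double_sum_indicator[OF finite_labels a a] double_sum_indicator[OF finite_labels b b])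
  qed
  finally show ?thesis .
qed

lemma quadratic_form_dominance:
  fixes a b q A B t :: real
  assumes psd: "\<And>x y. 0 \<le> x * x * a + 2 * x * y * q + y * y * b"
    and "0 < A" "0 \<le> b" "t\<^sup>2 \<le> A * B"
  shows "2 * t * q \<le> A * a + B * b"
proof -
  have "0 \<le> A * A * a + 2 * A * (- t) * q + (- t) * (- t) * b"
    by (rule psd)
  also have "\<dots> \<le> A * A * a - 2 * A * t * q + A * B * b"
    using mult_right_mono[OF assms(4,3)] by (simp add: power2_eq_square)
  also have "\<dots> = A * (A * a + B * b - 2 * t * q)"
    by (simp add: algebra_simps)
  finally show ?thesis
    using assms(2) by (simp add: zero_le_mult_iff)
qed

lemma coupling_squared: "(coupling L j)\<^sup>2 = kappa L j * kappa L (Suc j)"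
  by (simp add: coupling_def power_mult_distrib kappa_nonneg)

lemma half_le_gain:
  fixes lam :: real
  assumes "lam \<le> 3 + sqrt 5"
  shows "lam / 2 \<le> (3 + sqrt (1 + 2 * lam\<^sup>2)) / 4"
proof -
  have "2 * lam - 3 \<le> sqrt (1 + 2 * lam\<^sup>2)"
  proof (cases "2 * lam - 3 \<le> 0")
    case True
    then show ?thesis by (rule order_trans) simp
  next
    case False
    have "sqrt 5 \<ge> 3 / 2" by (rule real_le_rsqrt) (simp add: power2_eq_square)
    then have "\<bar>lam - 3\<bar> \<le> sqrt 5" using assms False by auto
    then have "(lam - 3)\<^sup>2 \<le> 5"
      using abs_le_square_iff[of "lam - 3" "sqrt 5"] by simp
    then have "(2 * lam - 3)\<^sup>2 \<le> 1 + 2 * lam\<^sup>2"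
      by (simp add: power2_eq_square algebra_simps)
    then show ?thesis by (rule real_le_rsqrt)
  qed
  then show ?thesis by simp
qed

lemma kappa_gap_bound:
  fixes lam :: real
  assumes L: "3 \<le> L" and j: "j \<in> {1..L-1}" and lam: "0 < lam"
  defines "g \<equiv> (3 + sqrt (1 + 2 * lam\<^sup>2)) / 4"
  shows "0 < g - kappa L (Suc j)"
    and "(lam * coupling L j / 2)\<^sup>2 \<le> (g - kappa L (Suc j)) * (g - kappa L j)"
proof -
  define s where "s = sqrt (1 + 2 * lam\<^sup>2)"
  have s_sq: "s\<^sup>2 = 1 + 2 * lam\<^sup>2" unfolding s_def by simp
  have "1 < s" unfolding s_def using lam by (simp add: power2_eq_square)
  have "lam \<le> s" unfolding s_def by (rule real_le_rsqrt) (simp add: power2_eq_square)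
  have g: "g = (3 + s) / 4" unfolding g_def s_def ..
  have lhs: "(lam * coupling L j / 2)\<^sup>2 = lam\<^sup>2 * (kappa L j * kappa L (Suc j)) / 4"
    by (simp add: power_mult_distrib power_divide coupling_squared)
  \<comment> \<open>since \<open>L \<ge> 3\<close>, the weights of two neighbouring slots are never both 1\<close>
  have cases: "kappa L j = 1 \<and> kappa L (Suc j) = 1 / 2 \<or> kappa L j = 1 / 2 \<and> kappa L (Suc j) = 1
      \<or> kappa L j = 1 / 2 \<and> kappa L (Suc j) = 1 / 2"
    using L j by (cases "j = 1"; cases "Suc j = L") (auto simp: kappa_def)
  then show "0 < g - kappa L (Suc j)"
    using \<open>1 < s\<close> g by auto
  from cases show "(lam * coupling L j / 2)\<^sup>2 \<le> (g - kappa L (Suc j)) * (g - kappa L j)"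
  proof (elim disjE conjE)
    assume h: "kappa L j = 1" "kappa L (Suc j) = 1 / 2"
    show ?thesis unfolding lhs g h using s_sq by (simp add: power2_eq_square field_simps)
  next
    assume h: "kappa L j = 1 / 2" "kappa L (Suc j) = 1"
    show ?thesis unfolding lhs g h using s_sq by (simp add: power2_eq_square field_simps)
  next
    assume h: "kappa L j = 1 / 2" "kappa L (Suc j) = 1 / 2"
    have "lam * lam \<le> (1 + s) * (1 + s)"
      using \<open>lam \<le> s\<close> lam by (intro mult_mono) auto
    then show ?thesis unfolding lhs g h by (simp add: power2_eq_square field_simps)
  qed
qed

lemma local_error_bound:
  fixes lam :: real
  assumes L: "3 \<le> L" and dens: "density_op L \<rho>" and j: "j \<in> {1..L-1}"
    and lam: "0 < lam" "lam \<le> 3 + sqrt 5"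
  defines "g \<equiv> (3 + sqrt (1 + 2 * lam\<^sup>2)) / 4" and "e \<equiv> re_entry L \<rho>"
  shows "lam * coupling L j * (e (j, j) (Suc j, Suc j) + e (j, Suc j) (Suc j, j))
      + kappa L (Suc j) * e (j, Suc j) (j, Suc j) + kappa L j * e (Suc j, j) (Suc j, j)
    \<le> g * (kappa L j * e (j, j) (j, j) + kappa L (Suc j) * e (Suc j, Suc j) (Suc j, Suc j)
      + e (j, Suc j) (j, Suc j) + e (Suc j, j) (Suc j, j))"
proof -
  let ?c = "coupling L j" and ?k = "kappa L j" and ?k' = "kappa L (Suc j)"
  have in_labels: "(j, j) \<in> labels L" "(j, Suc j) \<in> labels L" "(Suc j, j) \<in> labels L" "(Suc j, Suc j) \<in> labels L"
    using j by (auto simp: labels_def)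
  have k_pos: "0 < ?k" "0 < ?k'" by (simp_all add: kappa_def)
  have "lam / 2 \<le> g" unfolding g_def by (rule half_le_gain[OF lam(2)])
  have "(lam * ?c / 2)\<^sup>2 = (lam / 2)\<^sup>2 * (?k * ?k')"
    by (simp add: power_mult_distrib power_divide coupling_squared)
  also have "\<dots> \<le> g\<^sup>2 * (?k * ?k')"
    using \<open>lam / 2 \<le> g\<close> lam(1) k_pos by (intro mult_right_mono power_mono) auto
  also have "\<dots> = (g * ?k) * (g * ?k')"
    by (simp add: power2_eq_square mult_ac)
  finally have "(lam * ?c / 2)\<^sup>2 \<le> (g * ?k) * (g * ?k')" .
  note psd = re_entry_two_point_nonneg[OF dens, folded e_def]
  have psd_diag: "\<And>x y. 0 \<le> x * x * e (j, j) (j, j) + 2 * x * y * e (j, j) (Suc j, Suc j)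
      + y * y * e (Suc j, Suc j) (Suc j, Suc j)"
    using in_labels by (intro psd) auto
  have diag: "2 * (lam * ?c / 2) * e (j, j) (Suc j, Suc j)
      \<le> g * ?k * e (j, j) (j, j) + g * ?k' * e (Suc j, Suc j) (Suc j, Suc j)"
    by (rule quadratic_form_dominance[OF psd_diag])
      (use \<open>(lam * ?c / 2)\<^sup>2 \<le> (g * ?k) * (g * ?k')\<close> \<open>lam / 2 \<le> g\<close> lam(1) k_pos in_labels
        in \<open>auto simp: e_def re_entry_diag_nonneg[OF dens]\<close>)
  have psd_cross: "\<And>x y. 0 \<le> x * x * e (j, Suc j) (j, Suc j) + 2 * x * y * e (j, Suc j) (Suc j, j)
      + y * y * e (Suc j, j) (Suc j, j)"
    using in_labels by (intro psd) auto
  have cross: "2 * (lam * ?c / 2) * e (j, Suc j) (Suc j, j)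
      \<le> (g - ?k') * e (j, Suc j) (j, Suc j) + (g - ?k) * e (Suc j, j) (Suc j, j)"
    by (rule quadratic_form_dominance[OF psd_cross])
      (use kappa_gap_bound[OF L j lam(1), folded g_def] in_labels
        in \<open>auto simp: e_def re_entry_diag_nonneg[OF dens]\<close>)
  from diag cross show ?thesis by (simp add: algebra_simps)
qed

lemma sum_diag_neighbours_le:
  fixes f :: "nat \<times> nat \<Rightarrow> real"
  assumes "\<And>p. p \<in> labels L \<Longrightarrow> 0 \<le> f p"
  shows "(\<Sum>i\<in>{1..L}. f (i, i)) + (\<Sum>j\<in>{1..L-1}. f (j, Suc j)) + (\<Sum>j\<in>{1..L-1}. f (Suc j, j))
    \<le> (\<Sum>p\<in>labels L. f p)"
proof -
  define D where "D = (\<lambda>i. (i, i)) ` {1..L}"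
  define U where "U = (\<lambda>j. (j, Suc j)) ` {1..L-1}"
  define V where "V = (\<lambda>j. (Suc j, j)) ` {1..L-1}"
  have "(\<Sum>i\<in>{1..L}. f (i, i)) + (\<Sum>j\<in>{1..L-1}. f (j, Suc j)) + (\<Sum>j\<in>{1..L-1}. f (Suc j, j))
      = sum f D + sum f U + sum f V"
    unfolding D_def U_def V_def by (simp add: sum.reindex inj_on_def)
  also have "\<dots> = sum f (D \<union> U \<union> V)"
    unfolding D_def U_def V_def by (subst sum.union_disjoint; auto)+
  also have "\<dots> \<le> sum f (labels L)"
    using assms by (intro sum_mono2 finite_labels) (auto simp: D_def U_def V_def labels_def)
  finally show ?thesis .
qed

lemma phase_error_bound:
  fixes lam :: real
  assumes L: "3 \<le> L" and dens: "density_op L \<rho>" and inv: "P1_invariant L \<rho>"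
    and lam: "0 < lam" "lam \<le> 3 + sqrt 5"
  shows "Re (tr_prod L \<rho> (e_ph L))
    \<le> lam * Re (tr_prod L \<rho> (e_b L)) + (3 - 2 * lam + sqrt (1 + 2 * lam\<^sup>2)) / 4"
proof -
  let ?e = "re_entry L \<rho>" and ?J = "{1..L-1}" and ?k = "kappa L"
  define g where "g = (3 + sqrt (1 + 2 * lam\<^sup>2)) / 4"
  have "lam * (1 / 2 - Re (tr_prod L \<rho> (e_b L))) + Re (tr_prod L \<rho> (e_ph L))
      = (\<Sum>j\<in>?J. lam * coupling L j * (?e (j, j) (Suc j, Suc j) + ?e (j, Suc j) (Suc j, j))
          + ?k (Suc j) * ?e (j, Suc j) (j, Suc j) + ?k j * ?e (Suc j, j) (Suc j, j))"
    by (simp add: Re_tr_e_b[OF L dens inv] Re_tr_e_ph[OF inv] sum.distrib sum_distrib_left mult.assoc)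
  also have "\<dots> \<le> (\<Sum>j\<in>?J. g * (?k j * ?e (j, j) (j, j) + ?k (Suc j) * ?e (Suc j, Suc j) (Suc j, Suc j)
      + ?e (j, Suc j) (j, Suc j) + ?e (Suc j, j) (Suc j, j)))"
    unfolding g_def by (intro sum_mono local_error_bound[OF L dens _ lam])
  also have "\<dots> = g * ((\<Sum>i\<in>{1..L}. ?e (i, i) (i, i)) + (\<Sum>j\<in>?J. ?e (j, Suc j) (j, Suc j))
      + (\<Sum>j\<in>?J. ?e (Suc j, j) (Suc j, j)))"
    unfolding sum_kappa_weighted[OF L, of "\<lambda>i. ?e (i, i) (i, i)", symmetric]
    by (simp only: sum.distrib flip: sum_distrib_left)
  also have "\<dots> \<le> g * (\<Sum>p\<in>labels L. ?e p p)"
    using half_le_gain[OF lam(2)] lam(1) unfolding g_def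
    by (intro mult_left_mono sum_diag_neighbours_le re_entry_diag_nonneg[OF dens]) auto
  finally show ?thesis
    unfolding sum_re_entry_diag[OF dens inv] g_def by (simp add: field_simps)
qed

theorem theorem1:
  fixes L :: nat and \<rho> :: op
  assumes "L \<ge> 3"
    and "density_op L \<rho>"
    and "\<forall>x\<in>Idx L. \<forall>y\<in>Idx L.
           (\<Sum>z\<in>Idx L. \<Sum>w\<in>Idx L. P1 L x z * \<rho> z w * P1 L w y) = \<rho> x y"
  shows "let eb = Re (tr_prod L \<rho> (e_b L)); eph = Re (tr_prod L \<rho> (e_ph L)) in
           (0 \<le> eb \<and> eb \<le> (10 - 3 * sqrt 5) / 22 \<longrightarrow> eph \<le> (3 + sqrt 5) * eb) \<and>
           (eb > (10 - 3 * sqrt 5) / 22 \<longrightarrow>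
              eph \<le> (INF lam\<in>{0<..<3 + sqrt 5}.
                       lam * eb + (3 - 2 * lam + sqrt (1 + 2 * lam\<^sup>2)) / 4))"
proof -
  let ?eb = "Re (tr_prod L \<rho> (e_b L))" and ?eph = "Re (tr_prod L \<rho> (e_ph L))"
  have bound: "?eph \<le> lam * ?eb + (3 - 2 * lam + sqrt (1 + 2 * lam\<^sup>2)) / 4"
    if "0 < lam" "lam \<le> 3 + sqrt 5" for lam
    using phase_error_bound[OF assms that] .
  \<comment> \<open>the endpoint bound holds for every value of \<open>e\<^sup>b\<close>; the threshold in the statement only
    marks where the infimum ceases to be attained at the endpoint\<close>
  have "sqrt (1 + 2 * (3 + sqrt 5)\<^sup>2) = 3 + 2 * sqrt 5"
    by (rule real_sqrt_unique) (simp_all add: power2_eq_square algebra_simps)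
  then have "?eph \<le> (3 + sqrt 5) * ?eb"
    using bound[of "3 + sqrt 5"] by (simp add: add_pos_nonneg)
  moreover have "?eph \<le> (INF lam\<in>{0<..<3 + sqrt 5}. lam * ?eb + (3 - 2 * lam + sqrt (1 + 2 * lam\<^sup>2)) / 4)"
  proof (rule cINF_greatest)
    show "{0<..<3 + sqrt 5} \<noteq> ({} :: real set)"
      using add_pos_nonneg[of 3 "sqrt 5"] by simp
  qed (use bound in auto)
  ultimately show ?thesis
    unfolding Let_def by blast
qed

end
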